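(* Let $G_1,\ldots,G_d$ be finite simple undirected graphs, $G_i$ being $r_i$-regular with $k_i$ vertices, and set $s_i=k_i-r_i$. Assume $s_1<s_2<\cdots<s_d$. Then \[ E(K_d[G_1,\ldots,G_d])\ge 2\sum_{i=1}^{d-1}s_i+\sum_{i=1}^d E(G_i). \] In particular, if $d\ge 2$, then \[ E(K_d[G_1,\ldots,G_d])> E(K_d)+\sum_{i=1}^d E(G_i). \]
   Context: $K_d$ is the complete graph on $d$ vertices, and $K_d[G_1,\ldots,G_d]$ is the join of $G_1,\ldots,G_d$: the disjoint union of the $G_i$ with an edge added between every vertex of $G_i$ and every vertex of $G_j$ for all $i\ne j$. The energy $E(H)$ of a graph $H$ is the sum of the absolute values of the eigenvalues (with multiplicity) of its adjacency matrix. *)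

theory Defs
  imports "Jordan_Normal_Form.Char_Poly"
begin

definition mat_energy :: "complex mat \<Rightarrow> real" where
  "mat_energy A = (\<Sum>a\<in>{a. poly (char_poly A) a = 0}. real (order a (char_poly A)) * cmod a)"

(* A graph on vertex set {0..<n} given by an adjacency relation R. *)
definition adj_mat :: "nat \<Rightarrow> (nat \<Rightarrow> nat \<Rightarrow> bool) \<Rightarrow> complex mat" where
  "adj_mat n R = mat n n (\<lambda>(p,q). if R p q then 1 else 0)"

definition graph_energy :: "nat \<Rightarrow> (nat \<Rightarrow> nat \<Rightarrow> bool) \<Rightarrow> real" where
  "graph_energy n R = mat_energy (adj_mat n R)"

definition simple_graph :: "nat \<Rightarrow> (nat \<Rightarrow> nat \<Rightarrow> bool) \<Rightarrow> bool" where
  "simple_graph n R \<longleftrightarrow> (\<forall>u<n. \<forall>v<n. R u v = R v u) \<and> (\<forall>u<n. \<not> R u u)"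

definition regular_graph :: "nat \<Rightarrow> (nat \<Rightarrow> nat \<Rightarrow> bool) \<Rightarrow> nat \<Rightarrow> bool" where
  "regular_graph n R r \<longleftrightarrow> (\<forall>u<n. card {v. v < n \<and> R u v} = r)"

definition complete_rel :: "nat \<Rightarrow> nat \<Rightarrow> bool" where
  "complete_rel p q \<longleftrightarrow> p \<noteq> q"

(* offset of block i in the join: vertices of G_i are off k i + u, u < k i *)
definition off :: "(nat \<Rightarrow> nat) \<Rightarrow> nat \<Rightarrow> nat" where
  "off k i = (\<Sum>j<i. k j)"

(* adjacency of the join K_d[G_0,...,G_{d-1}] on vertex set {0..<off k d} *)
definition join_rel :: "nat \<Rightarrow> (nat \<Rightarrow> nat) \<Rightarrow> (nat \<Rightarrow> nat \<Rightarrow> nat \<Rightarrow> bool) \<Rightarrow> nat \<Rightarrow> nat \<Rightarrow> bool" where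
  "join_rel d k E p q \<longleftrightarrow> (\<exists>i<d. \<exists>j<d. \<exists>u<k i. \<exists>v<k j.
      p = off k i + u \<and> q = off k j + v \<and> (if i = j then E i u v else True))"

end

theory Submission
  imports Defs
begin

text \<open>The indicator vectors of the blocks span a subspace invariant under the adjacency matrix
  \<open>A\<close> of the join, on which \<open>A\<close> acts by the quotient matrix \<open>Q\<close> with \<open>Q\<^sub>i\<^sub>i = r\<^sub>i\<close> and
  \<open>Q\<^sub>i\<^sub>j = k\<^sub>j\<close> for \<open>i \<noteq> j\<close>. The same subspace is invariant under the adjacency matrix \<open>D\<close> of the
  disjoint union, which acts on it by \<open>diag r\<close>, and \<open>A\<close> and \<open>D\<close> induce the same map on the
  quotient space. Comparing characteristic polynomials gives
  \<open>E(K\<^sub>d[G\<^sub>1,...,G\<^sub>d]) + \<Sum> r\<^sub>i = E(Q) + \<Sum> E(G\<^sub>i)\<close>.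

  Off the poles \<open>-s\<^sub>j\<close>, \<open>x\<close> is an eigenvalue of \<open>Q\<close> iff \<open>\<Sum> k\<^sub>j / (x + s\<^sub>j) = 1\<close>. Sign changes
  give such an \<open>x\<close> in each interval \<open>(-s\<^sub>i\<^sub>+\<^sub>1, -s\<^sub>i)\<close> and one \<open>x \<ge> \<Sum> r\<^sub>j + S\<close>, where
  \<open>S = s\<^sub>1 + ... + s\<^sub>d\<^sub>-\<^sub>1\<close>; hence \<open>E(Q) \<ge> \<Sum> r\<^sub>j + 2 S\<close>, strictly if \<open>d \<ge> 2\<close>. Finally
  \<open>E(K\<^sub>d) = 2 (d - 1) \<le> 2 S\<close> because every \<open>s\<^sub>i \<ge> 1\<close>.\<close>

definition poly_energy :: "complex poly \<Rightarrow> real" where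
  "poly_energy p = (\<Sum>a\<in>{a. poly p a = 0}. real (order a p) * cmod a)"

lemma mat_energy_eq_poly_energy: "mat_energy A = poly_energy (char_poly A)"
  unfolding mat_energy_def poly_energy_def ..

lemma poly_energy_conv_sum_superset:
  assumes "finite S" "{a. poly p a = 0} \<subseteq> S"
  shows "poly_energy p = (\<Sum>a\<in>S. real (order a p) * cmod a)"
  unfolding poly_energy_def
  by (rule sum.mono_neutral_left[OF assms]) (auto simp: order_root)

lemma poly_energy_nonneg: "poly_energy p \<ge> 0"
  unfolding poly_energy_def by (intro sum_nonneg) auto

lemma poly_energy_mult:
  assumes "p \<noteq> 0" "q \<noteq> 0"
  shows "poly_energy (p * q) = poly_energy p + poly_energy q"
proof -
  let ?S = "{a. poly p a = 0} \<union> {a. poly q a = 0}"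
  have S: "finite ?S"
    using assms poly_roots_finite by auto
  have "poly_energy (p * q) = (\<Sum>a\<in>?S. real (order a (p * q)) * cmod a)"
    by (rule poly_energy_conv_sum_superset) (use S in auto)
  also have "\<dots> = (\<Sum>a\<in>?S. real (order a p) * cmod a + real (order a q) * cmod a)"
    using assms by (intro sum.cong) (auto simp: order_mult algebra_simps)
  also have "\<dots> = poly_energy p + poly_energy q"
    by (simp add: sum.distrib poly_energy_conv_sum_superset[OF S])
  finally show ?thesis .
qed

lemma poly_energy_linear: "poly_energy [:-c, 1:] = cmod c"
proof -
  have "poly_energy [:-c, 1:] = (\<Sum>a\<in>{c}. real (order a [:-c, 1:]) * cmod a)"
    by (rule poly_energy_conv_sum_superset) auto
  then show ?thesis
    using order_power_n_n[of c 1] by simp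
qed

lemma poly_energy_prod:
  fixes d :: nat
  assumes "\<And>i. i < d \<Longrightarrow> p i \<noteq> 0"
  shows "poly_energy (\<Prod>i<d. p i) = (\<Sum>i<d. poly_energy (p i))"
  using assms
proof (induction d)
  case 0
  show ?case by (simp add: poly_energy_def)
next
  case (Suc d)
  then show ?case by (simp add: poly_energy_mult)
qed

lemma poly_energy_ge_sum_roots:
  assumes "p \<noteq> 0" "finite F" "\<And>a. a \<in> F \<Longrightarrow> poly p a = 0"
  shows "(\<Sum>a\<in>F. cmod a) \<le> poly_energy p"
proof -
  have "(\<Sum>a\<in>F. cmod a) \<le> (\<Sum>a\<in>F. real (order a p) * cmod a)"
  proof (rule sum_mono)
    fix a assume "a \<in> F"
    then have "1 \<le> order a p"
      using assms order_root[of p a] by auto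
    then show "cmod a \<le> real (order a p) * cmod a"
      using mult_right_mono[of 1 "real (order a p)" "cmod a"] by simp
  qed
  also have "\<dots> \<le> poly_energy p"
    unfolding poly_energy_def using assms poly_roots_finite[of p]
    by (intro sum_mono2) auto
  finally show ?thesis .
qed

lemma poly_energy_ge_sum_real_roots:
  assumes "p \<noteq> 0" "finite R" "\<And>x. x \<in> R \<Longrightarrow> poly p (complex_of_real x) = 0"
  shows "(\<Sum>x\<in>R. \<bar>x\<bar>) \<le> poly_energy p"
proof -
  have "(\<Sum>x\<in>R. \<bar>x\<bar>) = (\<Sum>a\<in>complex_of_real ` R. cmod a)"
    by (subst sum.reindex) (auto intro: inj_onI)
  also have "\<dots> \<le> poly_energy p"
    using assms by (intro poly_energy_ge_sum_roots) auto
  finally show ?thesis .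
qed

lemma char_poly_nonzero: "A \<in> carrier_mat n n \<Longrightarrow> char_poly A \<noteq> 0"
  using degree_monic_char_poly[of A n] by auto

lemma poly_energy_char_poly_upper_triangular:
  assumes "A \<in> carrier_mat m m" "upper_triangular A" "\<And>i. i < m \<Longrightarrow> A $$ (i, i) = c i"
  shows "poly_energy (char_poly A) = (\<Sum>i<m. cmod (c i))"
proof -
  have "char_poly A = (\<Prod>a\<leftarrow>diag_mat A. [:- a, 1:])"
    by (rule char_poly_upper_triangular[OF assms(1,2)])
  also have "diag_mat A = map c [0..<m]"
    using assms by (auto simp: diag_mat_def)
  finally have "char_poly A = (\<Prod>i<m. [:- c i, 1:])"
    by (simp add: prod.distinct_set_conv_list[symmetric] comp_def atLeast0LessThan)
  then show ?thesis
    by (simp add: poly_energy_prod poly_energy_linear)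
qed

lemma char_poly_four_block_lower_left_zero:
  fixes A1 :: "'a :: idom mat"
  assumes "A1 \<in> carrier_mat n n" "A2 \<in> carrier_mat n m" "A4 \<in> carrier_mat m m"
  shows "char_poly (four_block_mat A1 A2 (0\<^sub>m m n) A4) = char_poly A1 * char_poly A4"
proof -
  let ?cm = "\<lambda>A. [:0, 1:] \<cdot>\<^sub>m 1\<^sub>m (dim_row A) + map_mat (\<lambda>a. [:- a:]) A"
  have "?cm (four_block_mat A1 A2 (0\<^sub>m m n) A4)
      = four_block_mat (?cm A1) (map_mat (\<lambda>a. [:- a:]) A2) (0\<^sub>m m n) (?cm A4)"
    using assms by (intro eq_matI) (auto simp: one_poly_def)
  moreover have "det \<dots> = det (?cm A1) * det (?cm A4)"
    using assms by (intro det_four_block_mat_lower_left_zero[of _ n _ m]) auto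
  ultimately show ?thesis
    unfolding char_poly_defs by simp
qed

definition block_of :: "(nat \<Rightarrow> nat) \<Rightarrow> nat \<Rightarrow> nat" where
  "block_of k p = (THE i. off k i \<le> p \<and> p < off k (Suc i))"

definition disjoint_union_rel :: "(nat \<Rightarrow> nat) \<Rightarrow> (nat \<Rightarrow> nat \<Rightarrow> nat \<Rightarrow> bool) \<Rightarrow> nat \<Rightarrow> nat \<Rightarrow> bool" where
  "disjoint_union_rel k E p q \<longleftrightarrow> block_of k p = block_of k q \<and>
     E (block_of k p) (p - off k (block_of k p)) (q - off k (block_of k q))"

lemma off_0 [simp]: "off k 0 = 0"
  by (simp add: off_def)

lemma off_Suc: "off k (Suc i) = off k i + k i"
  by (simp add: off_def)

lemma off_Suc_le_off: "i < j \<Longrightarrow> off k (Suc i) \<le> off k j"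
  unfolding off_def by (rule sum_mono2) auto

lemma block_of_eqI:
  assumes "off k i \<le> p" "p < off k (Suc i)"
  shows "block_of k p = i"
  unfolding block_of_def
proof (rule the_equality)
  fix j assume j: "off k j \<le> p \<and> p < off k (Suc j)"
  show "j = i"
  proof (rule linorder_cases[of i j])
    assume "i < j"
    then show ?thesis using off_Suc_le_off[of i j k] j assms by simp
  next
    assume "j < i"
    then show ?thesis using off_Suc_le_off[of j i k] j assms by simp
  qed simp
qed (use assms in simp)

lemma block_of_off_add [simp]: "u < k i \<Longrightarrow> block_of k (off k i + u) = i"
  by (rule block_of_eqI) (auto simp: off_Suc)

lemma block_of_bounds:
  assumes "p < off k d"
  shows "block_of k p < d" "off k (block_of k p) \<le> p" "p < off k (block_of k p) + k (block_of k p)"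
proof -
  have "block_of k p < d \<and> off k (block_of k p) \<le> p \<and> p < off k (Suc (block_of k p))"
    using assms
  proof (induction d)
    case (Suc d)
    show ?case
    proof (cases "p < off k d")
      case False
      then have "block_of k p = d"
        using Suc.prems by (intro block_of_eqI) auto
      then show ?thesis using Suc.prems False by auto
    qed (use Suc in auto)
  qed simp
  then show "block_of k p < d" "off k (block_of k p) \<le> p" "p < off k (block_of k p) + k (block_of k p)"
    by (simp_all add: off_Suc)
qed

lemma join_rel_iff:
  assumes "p < off k d" "q < off k d"
  shows "join_rel d k E p q \<longleftrightarrow> block_of k p \<noteq> block_of k q \<or> disjoint_union_rel k E p q"
proof
  assume "join_rel d k E p q"
  then show "block_of k p \<noteq> block_of k q \<or> disjoint_union_rel k E p q"
    unfolding join_rel_def disjoint_union_rel_def by (auto split: if_splits)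
next
  assume *: "block_of k p \<noteq> block_of k q \<or> disjoint_union_rel k E p q"
  let ?i = "block_of k p" and ?j = "block_of k q"
  have "?i < d \<and> ?j < d \<and> p - off k ?i < k ?i \<and> q - off k ?j < k ?j \<and>
      p = off k ?i + (p - off k ?i) \<and> q = off k ?j + (q - off k ?j) \<and>
      (if ?i = ?j then E ?i (p - off k ?i) (q - off k ?j) else True)"
    using block_of_bounds[OF assms(1)] block_of_bounds[OF assms(2)] *
    by (auto simp: disjoint_union_rel_def)
  then show "join_rel d k E p q"
    unfolding join_rel_def by blast
qed

lemma adj_mat_carrier [simp]: "adj_mat n R \<in> carrier_mat n n"
  by (simp add: adj_mat_def)

lemma adj_mat_disjoint_union_Suc:
  "adj_mat (off k (Suc d)) (disjoint_union_rel k E) =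
   four_block_mat (adj_mat (off k d) (disjoint_union_rel k E)) (0\<^sub>m (off k d) (k d))
     (0\<^sub>m (k d) (off k d)) (adj_mat (k d) (E d))"
proof (rule eq_matI)
  fix p q
  assume "p < dim_row (four_block_mat (adj_mat (off k d) (disjoint_union_rel k E)) (0\<^sub>m (off k d) (k d))
      (0\<^sub>m (k d) (off k d)) (adj_mat (k d) (E d)))"
    and "q < dim_col (four_block_mat (adj_mat (off k d) (disjoint_union_rel k E)) (0\<^sub>m (off k d) (k d))
      (0\<^sub>m (k d) (off k d)) (adj_mat (k d) (E d)))"
  then have pq: "p < off k d + k d" "q < off k d + k d"
    by (simp_all add: adj_mat_def)
  have old: "block_of k x < d" if "x < off k d" for x
    using block_of_bounds(1) that .
  have new: "block_of k x = d" if "\<not> x < off k d" "x < off k d + k d" for x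
    using that by (intro block_of_eqI) (auto simp: off_Suc)
  show "adj_mat (off k (Suc d)) (disjoint_union_rel k E) $$ (p, q) =
    four_block_mat (adj_mat (off k d) (disjoint_union_rel k E)) (0\<^sub>m (off k d) (k d))
      (0\<^sub>m (k d) (off k d)) (adj_mat (k d) (E d)) $$ (p, q)"
    using pq old[of p] old[of q] new[of p] new[of q]
    by (cases "p < off k d"; cases "q < off k d") (auto simp: adj_mat_def off_Suc disjoint_union_rel_def)
qed (simp_all add: adj_mat_def off_Suc)

lemma char_poly_disjoint_union:
  "char_poly (adj_mat (off k d) (disjoint_union_rel k E)) = (\<Prod>i<d. char_poly (adj_mat (k i) (E i)))"
proof (induction d)
  case 0
  show ?case
    using char_poly_upper_triangular[of "adj_mat 0 (disjoint_union_rel k E)" 0]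
    by (simp add: adj_mat_def upper_triangular_def diag_mat_def)
next
  case (Suc d)
  have "char_poly (adj_mat (off k (Suc d)) (disjoint_union_rel k E)) =
      char_poly (adj_mat (off k d) (disjoint_union_rel k E)) * char_poly (adj_mat (k d) (E d))"
    unfolding adj_mat_disjoint_union_Suc
    by (rule char_poly_four_block_lower_left_zero) (auto simp: adj_mat_def)
  then show ?case using Suc.IH by simp
qed

lemma sum_over_block:
  assumes "c < d"
  shows "(\<Sum>p\<in>{0..<off k d}. if block_of k p = c then h p else 0) = (\<Sum>u<k c. h (off k c + u))"
proof -
  have "(\<Sum>p\<in>{0..<off k d}. if block_of k p = c then h p else 0) =
      (\<Sum>p\<in>{off k c..<off k c + k c}. if block_of k p = c then h p else 0)"
  proof (rule sum.mono_neutral_right)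
    show "{off k c..<off k c + k c} \<subseteq> {0..<off k d}"
      using off_Suc_le_off[OF assms, of k] by (auto simp: off_Suc)
    show "\<forall>p\<in>{0..<off k d} - {off k c..<off k c + k c}. (if block_of k p = c then h p else 0) = 0"
    proof
      fix p assume "p \<in> {0..<off k d} - {off k c..<off k c + k c}"
      then have "block_of k p \<noteq> c"
        using block_of_bounds(2,3)[of p k d] by auto
      then show "(if block_of k p = c then h p else 0) = 0" by simp
    qed
  qed simp
  also have "\<dots> = (\<Sum>p\<in>{off k c..<off k c + k c}. h p)"
    by (intro sum.cong refl) (simp add: block_of_eqI off_Suc)
  also have "\<dots> = (\<Sum>u<k c. h (off k c + u))"
    using sum.atLeastLessThan_shift_0[of h "off k c" "off k c + k c"] by (simp add: comp_def lessThan_atLeast0)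
  finally show ?thesis .
qed

lemma sum_unit_mult_left:
  fixes f :: "nat \<Rightarrow> 'a :: semiring_1"
  assumes "a < m"
  shows "(\<Sum>p\<in>{0..<m}. (if p = a then 1 else 0) * f p) = f a"
  using assms by (subst sum.cong[OF refl, where h = "\<lambda>p. if p = a then f p else 0"]) auto

lemma sum_unit_mult_right:
  fixes f :: "nat \<Rightarrow> 'a :: semiring_1"
  assumes "a < m"
  shows "(\<Sum>p\<in>{0..<m}. f p * (if p = a then 1 else 0)) = f a"
  using assms by (subst sum.cong[OF refl, where h = "\<lambda>p. if p = a then f p else 0"]) auto

locale contiguous_blocks =
  fixes d :: nat and k :: "nat \<Rightarrow> nat"
  assumes block_nonempty: "\<And>i. i < d \<Longrightarrow> 0 < k i"
begin

abbreviation n :: nat where "n \<equiv> off k d"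

abbreviation block_start :: "nat \<Rightarrow> nat" where
  "block_start p \<equiv> off k (block_of k p)"

definition inner_vertices :: "nat set" where
  "inner_vertices = {0..<n} - off k ` {..<d}"

definition inner_vertex :: "nat \<Rightarrow> nat" where
  "inner_vertex c = sorted_list_of_set inner_vertices ! (c - d)"

text \<open>Columns \<open>c < d\<close> of the change of basis are the indicator vectors of the blocks, the
  columns \<open>d \<le> c < n\<close> the unit vectors of the vertices that do not start a block. When the sum of
  a row over each block depends only on the block of the row (an equitable partition), the span of
  the first \<open>d\<close> columns is invariant, so the matrix becomes block upper triangular with lower right
  block \<open>residual_mat\<close>.\<close>

definition block_basis :: "'a :: field mat" where
  "block_basis = mat n n (\<lambda>(p, c). if c < d then (if block_of k p = c then 1 else 0)
     else (if p = inner_vertex c then 1 else 0))"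

definition block_basis_inv :: "'a :: field mat" where
  "block_basis_inv = mat n n (\<lambda>(c, p). if c < d then (if p = off k c then 1 else 0)
     else (if p = inner_vertex c then 1 else 0) - (if p = block_start (inner_vertex c) then 1 else 0))"

definition residual_mat :: "'a :: field mat \<Rightarrow> 'a mat" where
  "residual_mat M = mat (n - d) (n - d) (\<lambda>(i, j).
     M $$ (inner_vertex (i + d), inner_vertex (j + d))
     - M $$ (block_start (inner_vertex (i + d)), inner_vertex (j + d)))"

lemma off_less_n: "i < d \<Longrightarrow> off k i < n"
  using off_Suc_le_off[of i d k] block_nonempty[of i] by (auto simp: off_Suc)

lemma block_of_off [simp]: "i < d \<Longrightarrow> block_of k (off k i) = i"
  using block_of_off_add[of 0 k i] block_nonempty by simp

lemma off_add_less_n: "i < d \<Longrightarrow> u < k i \<Longrightarrow> off k i + u < n"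
  using off_Suc_le_off[of i d k] by (simp add: off_Suc)

lemma block_start_less_n: "p < n \<Longrightarrow> block_start p < n"
  using block_of_bounds(2)[of p k d] by simp

lemma block_of_block_start [simp]: "p < n \<Longrightarrow> block_of k (block_start p) = block_of k p"
  using block_of_bounds(1)[of p k d] by simp

lemma card_block_starts: "card (off k ` {..<d}) = d"
proof -
  have "inj_on (off k) {..<d}"
    by (rule inj_onI) (metis block_of_off lessThan_iff)
  then show ?thesis
    by (simp add: card_image)
qed

lemma block_starts_subset: "off k ` {..<d} \<subseteq> {0..<n}"
  using off_less_n by auto

lemma d_le_n: "d \<le> n"
  using card_mono[OF _ block_starts_subset] card_block_starts by simp

lemma card_inner_vertices: "card inner_vertices = n - d"
  unfolding inner_vertices_def
  by (simp add: card_Diff_subset[OF _ block_starts_subset] card_block_starts finite_subset[OF block_starts_subset])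

lemma inner_vertex_in:
  assumes "d \<le> c" "c < n"
  shows "inner_vertex c \<in> inner_vertices"
proof -
  have "c - d < length (sorted_list_of_set inner_vertices)"
    using assms card_inner_vertices by simp
  then show ?thesis
    unfolding inner_vertex_def inner_vertices_def by (metis nth_mem set_sorted_list_of_set finite_Diff finite_atLeastLessThan)
qed

lemma inner_vertex_less_n: "d \<le> c \<Longrightarrow> c < n \<Longrightarrow> inner_vertex c < n"
  using inner_vertex_in unfolding inner_vertices_def by auto

lemma inner_vertex_neq_off: "d \<le> c \<Longrightarrow> c < n \<Longrightarrow> i < d \<Longrightarrow> inner_vertex c \<noteq> off k i"
  using inner_vertex_in unfolding inner_vertices_def by auto

lemma inner_vertex_inj:
  assumes "d \<le> c" "c < n" "d \<le> c'" "c' < n"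
  shows "inner_vertex c = inner_vertex c' \<longleftrightarrow> c = c'"
proof -
  have "c - d < length (sorted_list_of_set inner_vertices)" "c' - d < length (sorted_list_of_set inner_vertices)"
    using assms card_inner_vertices by simp_all
  then show ?thesis
    using assms unfolding inner_vertex_def by (auto simp: nth_eq_iff_index_eq)
qed

lemma index_mult_block_basis:
  assumes "M \<in> carrier_mat n n" "q < n" "c < n"
  shows "(M * block_basis) $$ (q, c) =
    (if c < d then (\<Sum>u<k c. M $$ (q, off k c + u)) else M $$ (q, inner_vertex c))"
proof (cases "c < d")
  case True
  have "(M * block_basis) $$ (q, c) = (\<Sum>p\<in>{0..<n}. if block_of k p = c then M $$ (q, p) else 0)"
    using assms True by (auto simp: scalar_prod_def block_basis_def intro!: sum.cong)
  with True show ?thesis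
    by (simp add: sum_over_block)
next
  case False
  have "(M * block_basis) $$ (q, c) = (\<Sum>p\<in>{0..<n}. M $$ (q, p) * (if p = inner_vertex c then 1 else 0))"
    using assms False by (auto simp: scalar_prod_def block_basis_def intro!: sum.cong)
  with False show ?thesis
    using assms inner_vertex_less_n[of c] by (simp add: sum_unit_mult_right)
qed

lemma index_block_basis_inv_mult:
  assumes "M \<in> carrier_mat n n" "c' < n" "c < n"
  shows "(block_basis_inv * M) $$ (c', c) = (if c' < d then M $$ (off k c', c)
    else M $$ (inner_vertex c', c) - M $$ (block_start (inner_vertex c'), c))"
proof (cases "c' < d")
  case True
  have "(block_basis_inv * M) $$ (c', c) = (\<Sum>p\<in>{0..<n}. (if p = off k c' then 1 else 0) * M $$ (p, c))"
    using assms True by (auto simp: scalar_prod_def block_basis_inv_def intro!: sum.cong)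
  with True show ?thesis
    using off_less_n[of c'] by (simp add: sum_unit_mult_left)
next
  case False
  let ?v = "inner_vertex c'"
  have "(block_basis_inv * M) $$ (c', c) =
      (\<Sum>p\<in>{0..<n}. (if p = ?v then M $$ (p, c) else 0) - (if p = block_start ?v then M $$ (p, c) else 0))"
    using assms False by (auto simp: scalar_prod_def block_basis_inv_def intro!: sum.cong)
  with False show ?thesis
    using assms inner_vertex_less_n[of c'] block_start_less_n[of ?v] by (simp add: sum_subtractf)
qed

lemma block_basis_inv_mult_block_basis: "block_basis_inv * block_basis = (1\<^sub>m n :: 'a :: field mat)"
proof (rule eq_matI)
  fix c' c assume "c' < dim_row (1\<^sub>m n :: 'a mat)" "c < dim_col (1\<^sub>m n :: 'a mat)"
  then have c: "c' < n" "c < n" by simp_all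
  have carrier: "(block_basis :: 'a mat) \<in> carrier_mat n n"
    by (simp add: block_basis_def)
  have entry: "(block_basis :: 'a mat) $$ (p, c) = (if c < d then (if block_of k p = c then 1 else 0)
     else (if p = inner_vertex c then 1 else 0))" if "p < n" for p
    using that c by (simp add: block_basis_def)
  show "(block_basis_inv * block_basis) $$ (c', c) = (1\<^sub>m n :: 'a mat) $$ (c', c)"
  proof (cases "c' < d")
    case True
    then show ?thesis
      using c off_less_n inner_vertex_neq_off[of c c']
      by (cases "c < d") (auto simp: index_block_basis_inv_mult[OF carrier c] entry)
  next
    case False
    let ?v = "inner_vertex c'"
    have v: "?v < n" "block_start ?v < n" "block_of k ?v < d"
      using False c inner_vertex_less_n block_start_less_n block_of_bounds(1) by auto
    show ?thesis
      using False c v inner_vertex_neq_off[of c "block_of k ?v"] inner_vertex_inj[of c' c]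
      by (cases "c < d") (auto simp: index_block_basis_inv_mult[OF carrier c] entry)
  qed
qed (simp_all add: block_basis_inv_def block_basis_def)

lemma similar_mat_block_basis:
  fixes M :: "'a :: field mat"
  assumes "M \<in> carrier_mat n n"
  shows "similar_mat M (block_basis_inv * M * block_basis)"
proof -
  have carrier: "(block_basis :: 'a mat) \<in> carrier_mat n n" "(block_basis_inv :: 'a mat) \<in> carrier_mat n n"
    by (simp_all add: block_basis_def block_basis_inv_def)
  note left_inv = block_basis_inv_mult_block_basis
  have right_inv: "block_basis * block_basis_inv = (1\<^sub>m n :: 'a mat)"
    using mat_mult_left_right_inverse[OF carrier(2,1) left_inv] .
  have "block_basis * (block_basis_inv * M * block_basis) * block_basis_inv
      = (block_basis * block_basis_inv) * M * (block_basis * block_basis_inv)"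
    using assms carrier by (simp add: assoc_mult_mat[of _ n n _ n _ n])
  then have "M = block_basis * (block_basis_inv * M * block_basis) * block_basis_inv"
    using assms by (simp add: right_inv)
  then show ?thesis
    unfolding similar_mat_def similar_mat_wit_def Let_def
    using assms carrier left_inv right_inv by (intro exI[of _ block_basis] exI[of _ block_basis_inv]) auto
qed

lemma char_poly_equitable_partition:
  fixes M Q :: "'a :: field mat"
  assumes M: "M \<in> carrier_mat n n" and Q: "Q \<in> carrier_mat d d"
    and row_sums: "\<And>p j. p < n \<Longrightarrow> j < d \<Longrightarrow> (\<Sum>u<k j. M $$ (p, off k j + u)) = Q $$ (block_of k p, j)"
  shows "char_poly M = char_poly Q * char_poly (residual_mat M)"
proof -
  define B where "B = block_basis_inv * M * block_basis"
  define X where "X = mat d (n - d) (\<lambda>(i, j). B $$ (i, j + d))"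
  have carrier: "(block_basis :: 'a mat) \<in> carrier_mat n n" "(block_basis_inv :: 'a mat) \<in> carrier_mat n n"
    by (simp_all add: block_basis_def block_basis_inv_def)
  have MB: "(M * block_basis) $$ (q, c) = (if c < d then Q $$ (block_of k q, c) else M $$ (q, inner_vertex c))"
    if "q < n" "c < n" for q c
    using index_mult_block_basis[OF M that] row_sums that by simp
  have B: "B $$ (i, j) = (if i < d then (M * block_basis) $$ (off k i, j) else
      (M * block_basis) $$ (inner_vertex i, j) - (M * block_basis) $$ (block_start (inner_vertex i), j))"
    if "i < n" "j < n" for i j
    using index_block_basis_inv_mult[of "M * block_basis", OF _ that] M carrier
    by (simp add: B_def assoc_mult_mat[of _ n n _ n _ n])
  have "char_poly M = char_poly B"
    unfolding B_def by (rule char_poly_similar[OF similar_mat_block_basis[OF M]])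
  also have "B = four_block_mat Q X (0\<^sub>m (n - d) d) (residual_mat M)"
  proof (rule eq_matI)
    fix i j
    assume "i < dim_row (four_block_mat Q X (0\<^sub>m (n - d) d) (residual_mat M))"
      and "j < dim_col (four_block_mat Q X (0\<^sub>m (n - d) d) (residual_mat M))"
    then have ij: "i < n" "j < n"
      using Q d_le_n by (simp_all add: X_def residual_mat_def)
    show "B $$ (i, j) = four_block_mat Q X (0\<^sub>m (n - d) d) (residual_mat M) $$ (i, j)"
      using Q ij off_less_n[of i] inner_vertex_less_n[of i] inner_vertex_less_n[of j]
        block_start_less_n[of "inner_vertex i"]
      by (cases "i < d"; cases "j < d") (auto simp: B MB X_def residual_mat_def)
  qed (use Q d_le_n in \<open>simp_all add: B_def X_def residual_mat_def block_basis_def block_basis_inv_def\<close>)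
  also have "char_poly \<dots> = char_poly Q * char_poly (residual_mat M)"
    using Q by (intro char_poly_four_block_lower_left_zero) (auto simp: X_def residual_mat_def)
  finally show ?thesis .
qed

end

text \<open>With \<open>w j = k j\<close> and \<open>s j = k j - r j\<close>, entry \<open>(i, j)\<close> counts the neighbours in \<open>G\<^sub>j\<close> of
  a vertex of \<open>G\<^sub>i\<close> in the join.\<close>

definition quotient_mat :: "nat \<Rightarrow> (nat \<Rightarrow> real) \<Rightarrow> (nat \<Rightarrow> real) \<Rightarrow> complex mat" where
  "quotient_mat d w s = mat d d (\<lambda>(i, j). complex_of_real (if i = j then w j - s j else w j))"

locale regular_join = contiguous_blocks +
  fixes r :: "nat \<Rightarrow> nat" and E :: "nat \<Rightarrow> nat \<Rightarrow> nat \<Rightarrow> bool"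
  assumes regular: "\<And>i. i < d \<Longrightarrow> regular_graph (k i) (E i) (r i)"
begin

abbreviation join_mat :: "complex mat" where
  "join_mat \<equiv> adj_mat n (join_rel d k E)"

abbreviation union_mat :: "complex mat" where
  "union_mat \<equiv> adj_mat n (disjoint_union_rel k E)"

lemma join_mat_index:
  assumes "p < n" "q < n"
  shows "join_mat $$ (p, q) = (if block_of k p = block_of k q then union_mat $$ (p, q) else 1)"
  using assms join_rel_iff[OF assms, of E] by (simp add: adj_mat_def)

lemma union_mat_row_sum:
  assumes "p < n" "j < d"
  shows "(\<Sum>u<k j. union_mat $$ (p, off k j + u)) = (if block_of k p = j then of_nat (r j) else 0)"
proof (cases "block_of k p = j")
  case True
  have "p - off k j < k j"
    using block_of_bounds[OF assms(1)] True by auto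
  then have "card {u. u < k j \<and> E j (p - off k j) u} = r j"
    using regular[OF assms(2)] unfolding regular_graph_def by blast
  moreover have "{..<k j} \<inter> {u. E j (p - off k j) u} = {u. u < k j \<and> E j (p - off k j) u}"
    by auto
  moreover have "(\<Sum>u<k j. union_mat $$ (p, off k j + u)) = (\<Sum>u<k j. of_bool (E j (p - off k j) u))"
    using assms True off_add_less_n by (intro sum.cong) (auto simp: adj_mat_def disjoint_union_rel_def)
  ultimately show ?thesis
    using True by simp
next
  case False
  then show ?thesis
    using assms off_add_less_n by (auto intro!: sum.neutral simp: adj_mat_def disjoint_union_rel_def)
qed

lemma join_mat_row_sum:
  assumes "p < n" "j < d"
  shows "(\<Sum>u<k j. join_mat $$ (p, off k j + u)) = (if block_of k p = j then of_nat (r j) else of_nat (k j))"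
proof -
  have "(\<Sum>u<k j. join_mat $$ (p, off k j + u)) =
      (\<Sum>u<k j. if block_of k p = j then union_mat $$ (p, off k j + u) else 1)"
    using assms off_add_less_n by (intro sum.cong) (auto simp: join_mat_index)
  then show ?thesis
    using union_mat_row_sum[OF assms] by simp
qed

lemma residual_join_mat: "residual_mat join_mat = residual_mat union_mat"
proof (rule eq_matI)
  fix i j assume "i < dim_row (residual_mat union_mat)" "j < dim_col (residual_mat union_mat)"
  then have ij: "d \<le> i + d" "i + d < n" "d \<le> j + d" "j + d < n"
    by (auto simp: residual_mat_def)
  let ?p = "inner_vertex (i + d)" and ?q = "inner_vertex (j + d)"
  have pq: "?p < n" "?q < n" "block_start ?p < n"
    using inner_vertex_less_n ij block_start_less_n by auto
  show "residual_mat join_mat $$ (i, j) = residual_mat union_mat $$ (i, j)"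
  proof (cases "block_of k ?q = block_of k ?p")
    case True
    then show ?thesis
      using ij pq by (simp add: residual_mat_def join_mat_index)
  next
    case False
    then show ?thesis
      using ij pq by (simp add: residual_mat_def join_mat_index) (simp add: adj_mat_def disjoint_union_rel_def)
  qed
qed (simp_all add: residual_mat_def)

lemma char_poly_join_mat:
  "char_poly join_mat = char_poly (quotient_mat d (\<lambda>j. real (k j)) (\<lambda>j. real (k j) - real (r j)))
     * char_poly (residual_mat union_mat)"
  unfolding residual_join_mat[symmetric]
  by (rule char_poly_equitable_partition)
    (use join_mat_row_sum block_of_bounds(1) in \<open>auto simp: quotient_mat_def\<close>)

lemma char_poly_union_mat:
  "char_poly union_mat = char_poly (mat d d (\<lambda>(i, j). if i = j then of_nat (r j) else 0))
     * char_poly (residual_mat union_mat)"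
  by (rule char_poly_equitable_partition)
    (use union_mat_row_sum block_of_bounds(1) in auto)

lemma join_energy_identity:
  "graph_energy n (join_rel d k E) + (\<Sum>i<d. real (r i)) =
   poly_energy (char_poly (quotient_mat d (\<lambda>j. real (k j)) (\<lambda>j. real (k j) - real (r j))))
   + (\<Sum>i<d. graph_energy (k i) (E i))"
proof -
  let ?Q = "quotient_mat d (\<lambda>j. real (k j)) (\<lambda>j. real (k j) - real (r j))"
  let ?R = "mat d d (\<lambda>(i, j). if i = j then of_nat (r j) else 0) :: complex mat"
  let ?C = "residual_mat union_mat"
  have nonzero: "char_poly ?Q \<noteq> 0" "char_poly ?R \<noteq> 0" "char_poly ?C \<noteq> 0"
    by (auto intro!: char_poly_nonzero simp: quotient_mat_def residual_mat_def)
  have "(\<Sum>i<d. graph_energy (k i) (E i)) = poly_energy (\<Prod>i<d. char_poly (adj_mat (k i) (E i)))"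
    using poly_energy_prod[of d "\<lambda>i. char_poly (adj_mat (k i) (E i))"]
    by (simp add: graph_energy_def mat_energy_eq_poly_energy char_poly_nonzero[OF adj_mat_carrier])
  also have "\<dots> = poly_energy (char_poly ?R) + poly_energy (char_poly ?C)"
    unfolding char_poly_disjoint_union[symmetric] char_poly_union_mat by (simp add: poly_energy_mult nonzero)
  also have "poly_energy (char_poly ?R) = (\<Sum>i<d. real (r i))"
    by (subst poly_energy_char_poly_upper_triangular[where c = "\<lambda>i. of_nat (r i)"])
      (auto simp: upper_triangular_def)
  finally have "(\<Sum>i<d. graph_energy (k i) (E i)) = (\<Sum>i<d. real (r i)) + poly_energy (char_poly ?C)" .
  moreover have "graph_energy n (join_rel d k E) = poly_energy (char_poly ?Q) + poly_energy (char_poly ?C)"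
    by (simp add: graph_energy_def mat_energy_eq_poly_energy char_poly_join_mat poly_energy_mult nonzero)
  ultimately show ?thesis
    by simp
qed

end

text \<open>\<open>K\<^sub>m\<close> is a single block with quotient matrix \<open>(m - 1)\<close> and residual matrix \<open>-I\<close>.\<close>

lemma complete_graph_energy:
  assumes "0 < m"
  shows "graph_energy m complete_rel = 2 * (real m - 1)"
proof -
  interpret K: contiguous_blocks "Suc 0" "\<lambda>_. m"
    using assms by unfold_locales simp
  have n: "off (\<lambda>_. m) (Suc 0) = m"
    by (simp add: off_def)
  have block: "block_of (\<lambda>_. m) p = 0" if "p < m" for p
    using that by (intro block_of_eqI) (simp_all add: off_def)
  have "K.inner_vertices = {1..<m}"
    unfolding K.inner_vertices_def n by auto
  then have inner: "K.inner_vertex c = c" if "1 \<le> c" "c < m" for c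
    using that unfolding K.inner_vertex_def by simp
  let ?K = "adj_mat m complete_rel"
  let ?C = "K.residual_mat ?K :: complex mat"
  have C_carrier: "?C \<in> carrier_mat (m - 1) (m - 1)"
    unfolding K.residual_mat_def n by simp
  have C_index: "?C $$ (i, j) = (if i = j then - 1 else 0)" if "i < m - 1" "j < m - 1" for i j
    using that unfolding K.residual_mat_def by (simp add: n inner block adj_mat_def complete_rel_def)
  have "char_poly ?K = char_poly (mat 1 1 (\<lambda>_. of_nat (m - 1))) * char_poly ?C"
  proof (rule K.char_poly_equitable_partition[unfolded n])
    fix p j :: nat assume "p < m" "j < Suc 0"
    then have "(\<Sum>u<m. ?K $$ (p, u)) = of_nat (card ({..<m} \<inter> {u. p \<noteq> u}))"
      by (simp add: adj_mat_def complete_rel_def of_bool_def[symmetric])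
    also have "{..<m} \<inter> {u. p \<noteq> u} = {..<m} - {p}"
      by auto
    finally show "(\<Sum>u<(\<lambda>_. m) j. ?K $$ (p, off (\<lambda>_. m) j + u)) = mat 1 1 (\<lambda>_. of_nat (m - 1)) $$ (block_of (\<lambda>_. m) p, j)"
      using \<open>p < m\<close> \<open>j < Suc 0\<close> by (simp add: block)
  qed (simp_all add: adj_mat_def)
  moreover have "poly_energy (char_poly ?C) = real (m - 1)"
    using C_carrier C_index
    by (subst poly_energy_char_poly_upper_triangular[where c = "\<lambda>_. - 1"]) (auto simp: upper_triangular_def)
  moreover have "poly_energy (char_poly (mat 1 1 (\<lambda>_. of_nat (m - 1)) :: complex mat)) = real (m - 1)"
    by (subst poly_energy_char_poly_upper_triangular[where c = "\<lambda>_. of_nat (m - 1)"])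
      (auto simp: upper_triangular_def)
  ultimately show ?thesis
    using assms char_poly_nonzero[OF C_carrier] char_poly_nonzero[of "mat 1 1 (\<lambda>_. of_nat (m - 1)) :: complex mat" 1]
    by (simp add: graph_energy_def mat_energy_eq_poly_energy poly_energy_mult)
qed

lemma IVT_sign_change:
  fixes f :: "real \<Rightarrow> real"
  assumes "a < b" "continuous_on {a..b} f" "f a * f b < 0"
  shows "\<exists>x. a < x \<and> x < b \<and> f x = 0"
proof -
  obtain x where x: "a \<le> x" "x \<le> b" "f x = 0"
  proof (cases "f a < 0")
    case True
    then have "0 < f b"
      using assms(3) by (simp add: mult_less_0_iff)
    then show ?thesis
      using IVT'[of f a 0 b] True assms that by auto
  next
    case False
    then have "f b < 0"
      using assms(3) by (simp add: mult_less_0_iff)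
    then show ?thesis
      using IVT2'[of f b 0 a] False assms that by auto
  qed
  moreover have "x \<noteq> a" "x \<noteq> b"
    using x assms(3) by auto
  ultimately show ?thesis
    by (intro exI[of _ x]) auto
qed

locale quotient_spectrum =
  fixes d :: nat and w s :: "nat \<Rightarrow> real"
  assumes w_pos: "\<And>j. j < d \<Longrightarrow> 0 < w j"
    and s_pos: "\<And>j. j < d \<Longrightarrow> 0 < s j"
    and s_le_w: "\<And>j. j < d \<Longrightarrow> s j \<le> w j"
    and s_increasing: "\<And>i. Suc i < d \<Longrightarrow> s i < s (Suc i)"
begin

lemma s_less: "i < j \<Longrightarrow> j < d \<Longrightarrow> s i < s j"
proof (induction j)
  case (Suc j)
  then show ?case
    using s_increasing[of j] by (cases "i = j") auto
qed simp

lemma s_le: "i \<le> j \<Longrightarrow> j < d \<Longrightarrow> s i \<le> s j"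
  using s_less[of i j] by (cases "i = j") auto

text \<open>By the matrix determinant lemma this is \<open>- det (x I - quotient_mat d w s)\<close>; we only need that
  away from the poles \<open>-s j\<close> it vanishes where \<open>\<Sum>j<d. w j / (x + s j) = 1\<close>, which makes
  \<open>j \<mapsto> 1 / (x + s j)\<close> an eigenvector.\<close>

definition secular :: "real \<Rightarrow> real" where
  "secular x = (\<Sum>j<d. w j * (\<Prod>l\<in>{..<d} - {j}. x + s l)) - (\<Prod>l<d. x + s l)"

lemma continuous_on_secular: "continuous_on A secular"
  unfolding secular_def by (intro continuous_intros)

lemma secular_eq:
  assumes "\<And>j. j < d \<Longrightarrow> x + s j \<noteq> 0"
  shows "secular x = (\<Prod>l<d. x + s l) * ((\<Sum>j<d. w j / (x + s j)) - 1)"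
proof -
  have "(\<Prod>l\<in>{..<d} - {j}. x + s l) = (\<Prod>l<d. x + s l) / (x + s j)" if "j < d" for j
    using that assms[OF that] by (simp add: prod.remove[of "{..<d}" j] nonzero_eq_divide_eq mult.commute)
  then show ?thesis
    unfolding secular_def by (simp add: sum_distrib_left algebra_simps)
qed

lemma secular_at_pole:
  assumes "i < d"
  shows "secular (- s i) = w i * (\<Prod>l\<in>{..<d} - {i}. s l - s i)"
proof -
  have "(\<Prod>l\<in>{..<d} - {j}. - s i + s l) = 0" if "j < d" "j \<noteq> i" for j
    using assms that by (intro prod_zero) auto
  then have "(\<Sum>j<d. w j * (\<Prod>l\<in>{..<d} - {j}. - s i + s l)) = w i * (\<Prod>l\<in>{..<d} - {i}. - s i + s l)"
    using assms by (subst sum.remove[of _ i]) (auto intro!: sum.neutral)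
  moreover have "(\<Prod>l<d. - s i + s l) = 0"
    using assms by (intro prod_zero) auto
  ultimately show ?thesis
    unfolding secular_def by simp
qed

lemma secular_at_pole_sign:
  assumes "i < d"
  shows "0 < (- 1) ^ i * secular (- s i)"
proof -
  have "{..<d} - {i} = {..<i} \<union> {Suc i..<d}"
    using assms by auto
  then have "(\<Prod>l\<in>{..<d} - {i}. s l - s i) = (\<Prod>l\<in>{..<i} \<union> {Suc i..<d}. s l - s i)"
    by simp
  also have "\<dots> = (\<Prod>l<i. s l - s i) * (\<Prod>l\<in>{Suc i..<d}. s l - s i)"
    by (rule prod.union_disjoint) auto
  also have "(\<Prod>l<i. s l - s i) = (- 1) ^ i * (\<Prod>l<i. s i - s l)"
    using prod_uminus[of "\<lambda>l. s i - s l" "{..<i}"] by simp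
  finally have "(- 1) ^ i * secular (- s i) = w i * (\<Prod>l<i. s i - s l) * (\<Prod>l\<in>{Suc i..<d}. s l - s i)"
    using assms by (simp add: secular_at_pole mult_ac)
  also have "0 < \<dots>"
    using assms w_pos s_less by (intro mult_pos_pos prod_pos) auto
  finally show ?thesis .
qed

lemma secular_root_between_poles:
  assumes "Suc i < d"
  shows "\<exists>x. - s (Suc i) < x \<and> x < - s i \<and> secular x = 0"
proof (rule IVT_sign_change)
  have "0 < (- 1) ^ i * secular (- s i)" "(- 1) ^ i * secular (- s (Suc i)) < 0"
    using assms secular_at_pole_sign[of i] secular_at_pole_sign[of "Suc i"] by simp_all
  then have "((- 1) ^ i * secular (- s i)) * ((- 1) ^ i * secular (- s (Suc i))) < 0"
    by (rule mult_pos_neg)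
  then show "secular (- s (Suc i)) * secular (- s i) < 0"
    by (simp add: mult_ac)
qed (use assms s_increasing continuous_on_secular in auto)

lemma secular_root_large:
  assumes "0 < d"
  shows "\<exists>x. (\<Sum>j<d. w j) - s (d - 1) \<le> x \<and> secular x = 0"
proof -
  define W where "W = (\<Sum>j<d. w j)"
  define x0 where "x0 = W - s (d - 1)"
  have x0_nonneg: "0 \<le> x0"
  proof -
    have "s (d - 1) \<le> w (d - 1)"
      using assms s_le_w by simp
    also have "\<dots> \<le> W"
      unfolding W_def using assms w_pos by (intro member_le_sum) (auto intro: less_imp_le)
    finally show ?thesis
      by (simp add: x0_def)
  qed
  have pos: "0 < x + s j" if "x0 \<le> x" "j < d" for x j
    using that x0_nonneg s_pos[OF that(2)] by simp
  have secular_eq_above: "secular x = (\<Prod>l<d. x + s l) * ((\<Sum>j<d. w j / (x + s j)) - 1)" if "x0 \<le> x" for x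
    using pos[OF that] by (intro secular_eq) (metis less_irrefl)
  have W_pos: "0 < W"
    unfolding W_def using assms w_pos by (intro sum_pos) auto
  have sum_w: "(\<Sum>j<d. w j / W) = 1"
    using W_pos by (simp add: W_def sum_divide_distrib[symmetric])
  have "1 \<le> (\<Sum>j<d. w j / (x0 + s j))"
    unfolding sum_w[symmetric]
  proof (rule sum_mono)
    fix j assume j: "j \<in> {..<d}"
    then have "x0 + s j \<le> W"
      using s_le[of j "d - 1"] by (simp add: x0_def)
    then show "w j / W \<le> w j / (x0 + s j)"
      using j pos[of x0 j] w_pos[of j] by (intro divide_left_mono) auto
  qed
  then have at_x0: "0 \<le> secular x0"
    unfolding secular_eq_above[OF order_refl] using pos[of x0]
    by (intro mult_nonneg_nonneg less_imp_le[OF prod_pos]) auto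
  have "(\<Sum>j<d. w j / (W + s j)) < 1"
    unfolding sum_w[symmetric]
  proof (rule sum_strict_mono)
    fix j assume j: "j \<in> {..<d}"
    then show "w j / (W + s j) < w j / W"
      using W_pos w_pos[of j] s_pos[of j] by (intro divide_strict_left_mono) auto
  qed (use assms in auto)
  moreover have "x0 \<le> W"
    using assms s_pos[of "d - 1"] by (simp add: x0_def)
  ultimately have at_W: "secular W \<le> 0"
    unfolding secular_eq_above[OF \<open>x0 \<le> W\<close>] using pos[of W]
    by (intro mult_nonneg_nonpos less_imp_le[OF prod_pos]) auto
  obtain x where "x0 \<le> x" "secular x = 0"
    using IVT2'[of secular W 0 x0] at_x0 at_W \<open>x0 \<le> W\<close> continuous_on_secular by blast
  then show ?thesis
    unfolding x0_def W_def by blast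
qed

lemma secular_root_is_eigenvalue:
  assumes no_pole: "\<And>j. j < d \<Longrightarrow> x + s j \<noteq> 0" and root: "secular x = 0"
  shows "poly (char_poly (quotient_mat d w s)) (complex_of_real x) = 0"
proof -
  have secular_sum: "(\<Sum>j<d. w j / (x + s j)) = 1"
    using root secular_eq[OF no_pole] no_pole by (simp add: prod_zero_iff)
  then have "0 < d"
    by (cases d) auto
  define v where "v = vec d (\<lambda>j. complex_of_real (1 / (x + s j)))"
  have "v $ 0 \<noteq> 0"
    using \<open>0 < d\<close> no_pole[of 0] by (simp add: v_def flip: of_real_add)
  then have v_nonzero: "v \<noteq> 0\<^sub>v d"
    using \<open>0 < d\<close> by auto
  have row: "(\<Sum>j<d. (if i = j then w j - s j else w j) * (1 / (x + s j))) = x * (1 / (x + s i))"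
    if "i < d" for i
  proof -
    have "(\<Sum>j<d. (if i = j then w j - s j else w j) * (1 / (x + s j))) =
        (\<Sum>j<d. w j / (x + s j) - (if j = i then s i / (x + s i) else 0))"
      by (intro sum.cong) (auto simp: diff_divide_distrib)
    also have "\<dots> = 1 - s i / (x + s i)"
      using that secular_sum by (simp add: sum_subtractf)
    also have "\<dots> = x * (1 / (x + s i))"
      using no_pole[OF that] by (simp add: field_simps)
    finally show ?thesis .
  qed
  have "quotient_mat d w s *\<^sub>v v = complex_of_real x \<cdot>\<^sub>v v"
  proof (rule eq_vecI)
    fix i assume "i < dim_vec (complex_of_real x \<cdot>\<^sub>v v)"
    then have i: "i < d"
      by (simp add: v_def)
    have "(quotient_mat d w s *\<^sub>v v) $ i =
        (\<Sum>j<d. complex_of_real ((if i = j then w j - s j else w j) * (1 / (x + s j))))"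
      using i by (simp add: quotient_mat_def v_def scalar_prod_def lessThan_atLeast0)
    also have "\<dots> = complex_of_real (x * (1 / (x + s i)))"
      unfolding of_real_sum[symmetric] row[OF i] ..
    finally show "(quotient_mat d w s *\<^sub>v v) $ i = (complex_of_real x \<cdot>\<^sub>v v) $ i"
      using i by (simp add: v_def)
  qed (simp add: v_def quotient_mat_def)
  then have "eigenvalue (quotient_mat d w s) (complex_of_real x)"
    unfolding eigenvalue_def eigenvector_def using v_nonzero
    by (intro exI[of _ v]) (simp add: v_def quotient_mat_def)
  then show ?thesis
    by (simp add: eigenvalue_root_char_poly[of _ d] quotient_mat_def)
qed

lemma sum_abs_secular_roots_le_poly_energy:
  assumes x: "0 \<le> x" "secular x = 0"
    and mu: "\<And>i. Suc i < d \<Longrightarrow> - s (Suc i) < mu i \<and> mu i < - s i \<and> secular (mu i) = 0"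
  shows "x + (\<Sum>i<d - 1. - mu i) \<le> poly_energy (char_poly (quotient_mat d w s))"
proof -
  have mu_neg: "mu i < 0" if "Suc i < d" for i
    using mu[OF that] s_pos[of i] that by auto
  have mu_decreasing: "mu j < mu i" if "i < j" "Suc j < d" for i j
    using mu[of i] mu[of j] s_le[of "Suc i" j] that by auto
  define R where "R = insert x (mu ` {..<d - 1})"
  have "inj_on mu {..<d - 1}"
    by (rule inj_onI) (metis lessThan_iff less_irrefl linorder_neqE_nat mu_decreasing less_diff_conv Suc_eq_plus1)
  moreover have "x \<notin> mu ` {..<d - 1}"
    using mu_neg x(1) by (force simp: less_diff_conv)
  moreover have "(\<Sum>i<d - 1. \<bar>mu i\<bar>) = (\<Sum>i<d - 1. - mu i)"
    using mu_neg by (intro sum.cong) (auto simp: less_diff_conv abs_if)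
  ultimately have "x + (\<Sum>i<d - 1. - mu i) = (\<Sum>y\<in>R. \<bar>y\<bar>)"
    using x(1) by (simp add: R_def sum.reindex)
  also have "\<dots> \<le> poly_energy (char_poly (quotient_mat d w s))"
  proof (rule poly_energy_ge_sum_real_roots)
    show "char_poly (quotient_mat d w s) \<noteq> 0"
      by (rule char_poly_nonzero[of _ d]) (simp add: quotient_mat_def)
    have "x + s j \<noteq> 0" if "j < d" for j
      using x(1) s_pos[OF that] by simp
    moreover have "mu i + s j \<noteq> 0" if "Suc i < d" "j < d" for i j
      using mu[OF that(1)] s_le[of j i] s_le[of "Suc i" j] that by (cases "j \<le> i") auto
    ultimately show "poly (char_poly (quotient_mat d w s)) (complex_of_real y) = 0" if "y \<in> R" for y
      using that x(2) mu unfolding R_def by (auto intro!: secular_root_is_eigenvalue)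
  qed (simp add: R_def)
  finally show ?thesis .
qed

lemma poly_energy_quotient_mat_bound:
  "(\<Sum>j<d. w j - s j) + 2 * (\<Sum>i<d - 1. s i) \<le> poly_energy (char_poly (quotient_mat d w s)) \<and>
   (2 \<le> d \<longrightarrow> (\<Sum>j<d. w j - s j) + 2 * (\<Sum>i<d - 1. s i) < poly_energy (char_poly (quotient_mat d w s)))"
proof (cases "d = 0")
  case True
  then show ?thesis
    by (simp add: poly_energy_nonneg)
next
  case False
  let ?lower = "(\<Sum>j<d. w j - s j) + (\<Sum>i<d - 1. s i)"
  obtain mu where mu: "\<And>i. Suc i < d \<Longrightarrow> - s (Suc i) < mu i \<and> mu i < - s i \<and> secular (mu i) = 0"
    using secular_root_between_poles by metis
  obtain x where x: "(\<Sum>j<d. w j) - s (d - 1) \<le> x" "secular x = 0"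
    using secular_root_large False by blast
  have "d = Suc (d - 1)"
    using False by simp
  then have "(\<Sum>j<d. s j) = (\<Sum>i<d - 1. s i) + s (d - 1)"
    by (metis sum.lessThan_Suc)
  with x have x_ge: "?lower \<le> x"
    by (simp add: sum_subtractf)
  have "0 \<le> ?lower"
    using s_le_w s_pos by (intro add_nonneg_nonneg sum_nonneg) (auto intro: less_imp_le)
  with x_ge x(2) mu have energy: "x + (\<Sum>i<d - 1. - mu i) \<le> poly_energy (char_poly (quotient_mat d w s))"
    by (intro sum_abs_secular_roots_le_poly_energy) auto
  have s_less_mu: "s i < - mu i" if "i \<in> {..<d - 1}" for i
    using mu[of i] that by (auto simp: less_diff_conv)
  then have "(\<Sum>i<d - 1. s i) \<le> (\<Sum>i<d - 1. - mu i)"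
    by (intro sum_mono less_imp_le) auto
  moreover have "(\<Sum>i<d - 1. s i) < (\<Sum>i<d - 1. - mu i)" if "2 \<le> d"
    using s_less_mu that by (intro sum_strict_mono) (auto simp: lessThan_empty_iff)
  ultimately show ?thesis
    using energy x_ge by auto
qed

end

lemma regular_degree_less:
  assumes "simple_graph m R" "regular_graph m R r" "0 < m"
  shows "r < m"
proof -
  have "{v. v < m \<and> R 0 v} \<subseteq> {0..<m} - {0}"
    using assms(1,3) unfolding simple_graph_def by auto
  then have "card {v. v < m \<and> R 0 v} \<le> m - 1"
    using card_mono[of "{0..<m} - {0}"] assms(3) by fastforce
  then show ?thesis
    using assms(2,3) unfolding regular_graph_def by fastforce
qed

theorem mainTheorem13:
  fixes d :: nat and k r :: "nat \<Rightarrow> nat" and E :: "nat \<Rightarrow> nat \<Rightarrow> nat \<Rightarrow> bool"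
  assumes nonempty: "\<forall>i<d. k i > 0"
    and simple: "\<forall>i<d. simple_graph (k i) (E i)"
    and regular: "\<forall>i<d. regular_graph (k i) (E i) (r i)"
    and incr: "\<forall>i. i + 1 < d \<longrightarrow> int (k i) - int (r i) < int (k (i+1)) - int (r (i+1))"
  shows "graph_energy (off k d) (join_rel d k E)
           \<ge> 2 * (\<Sum>i<d-1. real (k i) - real (r i)) + (\<Sum>i<d. graph_energy (k i) (E i))
         \<and> (d \<ge> 2 \<longrightarrow> graph_energy (off k d) (join_rel d k E)
           > graph_energy d complete_rel + (\<Sum>i<d. graph_energy (k i) (E i)))"
proof -
  interpret regular_join d k r E
    using nonempty regular by unfold_locales auto
  have r_less_k: "r i < k i" if "i < d" for i
    using regular_degree_less simple regular nonempty that by blast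
  interpret quotient_spectrum d "\<lambda>j. real (k j)" "\<lambda>j. real (k j) - real (r j)"
    using nonempty r_less_k incr by unfold_locales (auto simp: of_nat_diff)
  let ?S = "\<Sum>i<d - 1. real (k i) - real (r i)"
  have complete: "graph_energy d complete_rel \<le> 2 * ?S" if "2 \<le> d"
  proof -
    have "1 \<le> real (k i) - real (r i)" if "i < d" for i
      using r_less_k[OF that] by linarith
    then have "(\<Sum>i<d - 1. 1) \<le> ?S"
      by (intro sum_mono) auto
    then show ?thesis
      using complete_graph_energy[of d] that by (simp add: of_nat_diff)
  qed
  show ?thesis
    using join_energy_identity poly_energy_quotient_mat_bound complete by auto
qed

end
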